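(* Let $P\subset\mathbb{R}^n$ be a Delzant polytope in standard position at the vertex $O=0$, and let $u$ be a normalized symplectic potential on $P$ with $|Rm|\le1$ and $\int_{\partial P}u\,d\sigma<C_1$. Let $Q$ be the facet of $P$ contained in the hyperplane $\{x_n=0\}$ (the $x_1\cdots x_{n-1}$ plane). For $\epsilon>0$ let $Q_\epsilon$ be the set of points of $Q$ at distance at least $\epsilon$ from $\partial Q$. Then there exists a constant $C$ depending only on $\epsilon$, $C_1$ and $P$ such that for every $x\in Q_\epsilon$, $$u(x)<C,\quad\left|\frac{\partial u}{\partial x_1}\right|(x)<C,\ \dots,\ \left|\frac{\partial u}{\partial x_{n-1}}\right|(x)<C.$$
   Context: Standard position: $O=0$ is a vertex of $P$, the $n$ facets through $O$ are the coordinate hyperplanes, $P$ lies in the closed first orthant, and the segments $\{te_i:0\le t\le1\}$ lie on the edges of $P$ through $O$. $P$ has facets $P_j$ with primitive inward normals $\vec n_j$. A symplectic potential is a function on $\bar P$, smooth and strictly convex in the interior, with smooth strictly convex restriction to each face of $\partial P$, satisfying Guillemin's boundary conditions. $(u^{ij})$ is the inverse Hessian, $u^{ij}_{~kl}=\partial_k\partial_lu^{ij}$, $|Rm|^2=\sum u^{ij}_{~kl}u^{kl}_{~ij}$. A fixed interior point $x_0$ is chosen and $u$ is normalized if $u(x_0)=0$, $Du(x_0)=0$. $d\sigma$ is, on each facet $P_j$, Lebesgue measure divided by $|\vec n_j|$. *)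

theory Defs
  imports "HOL-Analysis.Analysis"
begin

definition partial :: "'n::finite \<Rightarrow> (real^'n \<Rightarrow> real) \<Rightarrow> real^'n \<Rightarrow> real" where
  "partial i g x = deriv (\<lambda>t. g (x + t *\<^sub>R axis i 1)) 0"

definition iter_partial :: "'n::finite list \<Rightarrow> (real^'n \<Rightarrow> real) \<Rightarrow> real^'n \<Rightarrow> real" where
  "iter_partial is g = foldr partial is g"

definition C_inf_on :: "(real^'n::finite) set \<Rightarrow> (real^'n \<Rightarrow> real) \<Rightarrow> bool" where
  "C_inf_on U g \<longleftrightarrow> open U \<and>
     (\<forall>is. continuous_on U (iter_partial is g) \<and>
        (\<forall>i. \<forall>x\<in>U. (\<lambda>t. iter_partial is g (x + t *\<^sub>R axis i 1)) differentiable (at 0)))"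

definition smooth_on :: "(real^'n::finite) set \<Rightarrow> (real^'n \<Rightarrow> real) \<Rightarrow> bool" where
  "smooth_on S f \<longleftrightarrow> (\<exists>U g. S \<subseteq> U \<and> C_inf_on U g \<and> (\<forall>x\<in>S. g x = f x))"

definition strictly_convex_on :: "(real^'n::finite) set \<Rightarrow> (real^'n \<Rightarrow> real) \<Rightarrow> bool" where
  "strictly_convex_on S f \<longleftrightarrow> convex S \<and>
     (\<forall>x\<in>S. \<forall>y\<in>S. x \<noteq> y \<longrightarrow> (\<forall>t. 0 < t \<and> t < 1 \<longrightarrow>
        f ((1 - t) *\<^sub>R x + t *\<^sub>R y) < (1 - t) * f x + t * f y))"

definition hess :: "(real^'n::finite \<Rightarrow> real) \<Rightarrow> real^'n \<Rightarrow> real^'n^'n" where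
  "hess u x = (\<chi> i j. partial i (partial j u) x)"

definition inv_hess :: "(real^'n::finite \<Rightarrow> real) \<Rightarrow> 'n \<Rightarrow> 'n \<Rightarrow> real^'n \<Rightarrow> real" where
  "inv_hess u i j x = matrix_inv (hess u x) $ i $ j"

definition Rm_sq :: "(real^'n::finite \<Rightarrow> real) \<Rightarrow> real^'n \<Rightarrow> real" where
  "Rm_sq u x = (\<Sum>i\<in>UNIV. \<Sum>j\<in>UNIV. \<Sum>k\<in>UNIV. \<Sum>l\<in>UNIV.
      partial k (partial l (inv_hess u i j)) x * partial i (partial j (inv_hess u k l)) x)"

definition integral_vec :: "real^'n::finite \<Rightarrow> bool" where
  "integral_vec v \<longleftrightarrow> (\<forall>i. v $ i \<in> \<int>)"

definition primitive_vec :: "real^'n::finite \<Rightarrow> bool" where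
  "primitive_vec v \<longleftrightarrow> integral_vec v \<and> v \<noteq> 0 \<and>
     (\<forall>m::int. m > 1 \<longrightarrow> \<not> integral_vec ((1 / of_int m) *\<^sub>R v))"

definition prim_inward_normal :: "(real^'n::finite) set \<Rightarrow> (real^'n) set \<Rightarrow> real^'n \<Rightarrow> bool" where
  "prim_inward_normal P F nu \<longleftrightarrow> primitive_vec nu \<and>
     (\<exists>c. (\<forall>x\<in>F. nu \<bullet> x = c) \<and> (\<forall>x\<in>P. c \<le> nu \<bullet> x))"

definition facet_normal :: "(real^'n::finite) set \<Rightarrow> (real^'n) set \<Rightarrow> real^'n" where
  "facet_normal P F = (THE nu. prim_inward_normal P F nu)"

definition facet_fun :: "(real^'n::finite) set \<Rightarrow> (real^'n) set \<Rightarrow> real^'n \<Rightarrow> real" where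
  "facet_fun P F x = facet_normal P F \<bullet> x - facet_normal P F \<bullet> (SOME a. a \<in> F)"

definition delzant :: "(real^'n::finite) set \<Rightarrow> bool" where
  "delzant P \<longleftrightarrow> polytope P \<and> interior P \<noteq> {} \<and>
     (\<forall>F. F facet_of P \<longrightarrow> (\<exists>nu. prim_inward_normal P F nu)) \<and>
     (\<forall>v. v extreme_point_of P \<longrightarrow>
        (let Fs = {F. F facet_of P \<and> v \<in> F} in
           card Fs = CARD('n) \<and> inj_on (facet_normal P) Fs \<and>
           independent (facet_normal P ` Fs) \<and>
           (\<forall>z. integral_vec z \<longrightarrow>
              (\<exists>c :: (real^'n) set \<Rightarrow> int. z = (\<Sum>F\<in>Fs. of_int (c F) *\<^sub>R facet_normal P F)))))"

definition standard_position :: "(real^'n::finite) set \<Rightarrow> bool" where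
  "standard_position P \<longleftrightarrow> 0 extreme_point_of P \<and>
     P \<subseteq> {x. \<forall>i. 0 \<le> x $ i} \<and>
     {F. F facet_of P \<and> 0 \<in> F} = range (\<lambda>i. P \<inter> {x. x $ i = 0}) \<and>
     (\<forall>i. \<exists>E. E face_of P \<and> aff_dim E = 1 \<and> closed_segment 0 (axis i 1) \<subseteq> E)"

definition symplectic_potential :: "(real^'n::finite) set \<Rightarrow> (real^'n \<Rightarrow> real) \<Rightarrow> bool" where
  "symplectic_potential P u \<longleftrightarrow>
     C_inf_on (interior P) u \<and> strictly_convex_on (interior P) u \<and>
     (\<forall>F. F face_of P \<and> F \<noteq> {} \<and> F \<subseteq> frontier P \<longrightarrow>
        smooth_on (rel_interior F) u \<and> strictly_convex_on (rel_interior F) u) \<and>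
     \<comment> \<open>Guillemin boundary conditions\<close>
     (\<exists>f. smooth_on P f \<and>
        (\<forall>x\<in>P. u x = (1/2) * (\<Sum>F\<in>{F. F facet_of P}. facet_fun P F x * ln (facet_fun P F x)) + f x)) \<and>
     (\<exists>\<delta>. smooth_on P \<delta> \<and> (\<forall>x\<in>P. 0 < \<delta> x) \<and>
        (\<forall>x\<in>interior P. det (hess u x) = inverse (\<delta> x * (\<Prod>F\<in>{F. F facet_of P}. facet_fun P F x))))"

definition normalized_at :: "real^'n::finite \<Rightarrow> (real^'n \<Rightarrow> real) \<Rightarrow> bool" where
  "normalized_at x0 u \<longleftrightarrow> u x0 = 0 \<and> (\<forall>i. partial i u x0 = 0)"

text \<open>(n-1)-dimensional Lebesgue integral over a facet F with unit normal e, computed as the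
  n-dimensional integral over the unit-thickness slab F + [0,1] e of f composed with the
  orthogonal projection back onto the hyperplane of F.\<close>
definition facet_lebesgue_integral :: "(real^'n::finite) set \<Rightarrow> real^'n \<Rightarrow> (real^'n \<Rightarrow> real) \<Rightarrow> real" where
  "facet_lebesgue_integral F nu f =
     (let e = (1 / norm nu) *\<^sub>R nu; a0 = (SOME a. a \<in> F) in
      integral {a + t *\<^sub>R e | a t. a \<in> F \<and> 0 \<le> t \<and> t \<le> 1}
        (\<lambda>x. f (x - ((x - a0) \<bullet> e) *\<^sub>R e)))"

text \<open>Integral over the boundary of P w.r.t. d sigma = Lebesgue / |n_j| on each facet P_j.\<close>
definition boundary_integral :: "(real^'n::finite) set \<Rightarrow> (real^'n \<Rightarrow> real) \<Rightarrow> real" where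
  "boundary_integral P f = (\<Sum>F\<in>{F. F facet_of P}.
      facet_lebesgue_integral F (facet_normal P F) f / norm (facet_normal P F))"

definition inner_part :: "(real^'n::finite) set \<Rightarrow> real \<Rightarrow> (real^'n) set" where
  "inner_part Q eps = {x\<in>Q. \<forall>y\<in>rel_frontier Q. eps \<le> dist x y}"

end

theory Submission
  imports Defs "HOL-Real_Asymp.Real_Asymp"
begin

text \<open>A normalized potential is convex with a critical point at \<open>x0\<close>, hence \<open>u \<ge> 0\<close> on \<open>P\<close>.
  The facet \<open>Q = P \<inter> {x_k = 0}\<close> has primitive normal \<open>e_k\<close>, so the boundary integral dominates
  the integral of \<open>u\<close> over \<open>Q\<close>. Averaging \<open>u\<close> over a small box centred at a point
  \<open>x \<in> Q_eps\<close> and using convexity shows that this integral is at least the volume of the box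
  times \<open>u x\<close>, which bounds \<open>u\<close> on \<open>Q_eps\<close>. The tangential derivatives are then bounded because
  a nonnegative convex function on \<open>[-r, r]\<close> that is less than \<open>M\<close> at \<open>\<plusminus>r\<close> has slope less
  than \<open>M / r\<close> at \<open>0\<close>; one takes \<open>r = eps / 2\<close> and the bound on \<open>Q_(eps/2)\<close>.\<close>

lemma not_Ints_between_0_1: "0 < (x::real) \<Longrightarrow> x < 1 \<Longrightarrow> x \<notin> \<int>"
  by (auto elim!: Ints_cases)

lemma primitive_vec_integral_multiple:
  fixes b :: "real^'n::finite"
  assumes b: "primitive_vec b" and lb: "integral_vec (l *\<^sub>R b)" and l: "l > 0"
  shows "l \<in> \<int>"
proof -
  obtain j where bj: "b $ j \<noteq> 0" using b by (auto simp: primitive_vec_def vec_eq_iff)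
  have "l = (l *\<^sub>R b) $ j / b $ j" using bj by simp
  then have "l \<in> \<rat>" using lb b by (metis Ints_subset_Rats Rats_divide integral_vec_def primitive_vec_def subsetD)
  then obtain p q :: int where q: "q > 0" and cop: "coprime p q" and lpq: "l = of_int p / of_int q"
    by (rule Rats_cases')
  have q_dvd: "q dvd B" if "b $ i = of_int B" for i B
  proof -
    obtain A where "(l *\<^sub>R b) $ i = of_int A" using lb by (auto simp: integral_vec_def elim!: Ints_cases)
    then have "real_of_int (q * A) = of_int (p * B)" using that lpq q by (simp add: field_simps)
    then have "q dvd p * B" by (metis dvd_triv_left of_int_eq_iff)
    then show ?thesis using cop by (metis coprime_commute coprime_dvd_mult_right_iff)
  qed
  have "((1 / of_int q) *\<^sub>R b) $ i \<in> \<int>" for i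
  proof -
    obtain B where B: "b $ i = of_int B" using b by (auto simp: primitive_vec_def integral_vec_def elim!: Ints_cases)
    then show ?thesis using q_dvd[OF B] by (simp add: of_int_divide_in_Ints)
  qed
  then have "integral_vec ((1 / of_int q) *\<^sub>R b)" by (simp add: integral_vec_def)
  then have "q = 1" using b q unfolding primitive_vec_def by (cases "q > 1") auto
  then show ?thesis using lpq by simp
qed

lemma primitive_vec_scaleR_eq:
  fixes a b :: "real^'n::finite"
  assumes a: "primitive_vec a" and b: "primitive_vec b" and ab: "a = l *\<^sub>R b" and l: "l > 0"
  shows "l = 1"
proof -
  have "b = (1 / l) *\<^sub>R a" using ab l by simp
  then have "1 / l \<in> \<int>" using primitive_vec_integral_multiple[OF a] b l
    by (simp add: primitive_vec_def)
  moreover have "l \<in> \<int>" using primitive_vec_integral_multiple[OF b] a ab l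
    by (simp add: primitive_vec_def)
  ultimately show ?thesis using l not_Ints_between_0_1[of "1 / l"]
    by (auto elim!: Ints_cases simp: divide_less_eq) presburger
qed

lemma supporting_halfspace_interior_less:
  fixes nu p :: "real^'n::finite"
  assumes nu: "nu \<noteq> 0" and c: "\<forall>x\<in>P. c \<le> nu \<bullet> x" and p: "p \<in> interior P"
  shows "c < nu \<bullet> p"
proof -
  obtain e where e: "e > 0" "ball p e \<subseteq> P" using p by (meson mem_interior)
  define q where "q = p - (e / (2 * norm nu)) *\<^sub>R nu"
  have nn: "norm nu > 0" using nu by simp
  have "dist p q = e / 2" using nn e by (simp add: q_def dist_norm)
  then have "q \<in> P" using e by auto
  then have "c \<le> nu \<bullet> q" using c by blast
  also have "nu \<bullet> q = nu \<bullet> p - e / 2 * norm nu"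
    using nn by (simp add: q_def inner_diff_right power2_norm_eq_inner[symmetric] power2_eq_square)
  also have "\<dots> < nu \<bullet> p" using e nn by simp
  finally show ?thesis .
qed

lemma hyperplane_normal_parallel:
  fixes nu w :: "real^'n::finite"
  assumes sp: "span ((\<lambda>x. x - a) ` F) = {x. w \<bullet> x = 0}" and w: "w \<noteq> 0"
    and on: "\<forall>x\<in>F. nu \<bullet> x = c" and a: "a \<in> F"
  shows "\<exists>l. nu = l *\<^sub>R w"
proof -
  have "(\<lambda>x. x - a) ` F \<subseteq> {x. nu \<bullet> x = 0}" using on a by (auto simp: inner_diff_right)
  then have sub: "{x. w \<bullet> x = 0} \<subseteq> {x. nu \<bullet> x = 0}"
    using sp span_minimal[OF _ subspace_hyperplane] by metis
  define w' where "w' = nu - ((nu \<bullet> w) / (w \<bullet> w)) *\<^sub>R w"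
  have "w \<bullet> w' = 0" using w by (simp add: w'_def inner_diff_right inner_commute)
  moreover from this have "nu \<bullet> w' = 0" using sub by blast
  ultimately have "w' \<bullet> w' = 0" by (simp add: w'_def inner_diff_left)
  then show ?thesis unfolding w'_def by (metis eq_iff_diff_eq_0 inner_eq_zero_iff)
qed

lemma prim_inward_normal_unique:
  fixes P F :: "(real^'n::finite) set"
  assumes int: "interior P \<noteq> {}" and F: "F facet_of P"
    and n1: "prim_inward_normal P F n1" and n2: "prim_inward_normal P F n2"
  shows "n1 = n2"
proof -
  obtain c1 where c1: "\<forall>x\<in>F. n1 \<bullet> x = c1" "\<forall>x\<in>P. c1 \<le> n1 \<bullet> x" and p1: "primitive_vec n1"
    using n1 unfolding prim_inward_normal_def by blast
  obtain c2 where c2: "\<forall>x\<in>F. n2 \<bullet> x = c2" "\<forall>x\<in>P. c2 \<le> n2 \<bullet> x" and p2: "primitive_vec n2"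
    using n2 unfolding prim_inward_normal_def by blast
  have n10: "n1 \<noteq> 0" and n20: "n2 \<noteq> 0" using p1 p2 by (auto simp: primitive_vec_def)
  obtain a where a: "a \<in> F" using F by (auto simp: facet_of_def)
  have "aff_dim F = int DIM(real^'n) - 1"
    using F aff_dim_nonempty_interior[OF int] by (simp add: facet_of_def)
  then have "dim ((\<lambda>x. x - a) ` F) = DIM(real^'n) - 1"
    using aff_dim_eq_dim_subtract[of a F] a hull_inc by fastforce
  then obtain w where w: "w \<noteq> 0" "span ((\<lambda>x. x - a) ` F) = {x. w \<bullet> x = 0}"
    by (rule lowdim_eq_hyperplane)
  obtain l1 where l1: "n1 = l1 *\<^sub>R w" using hyperplane_normal_parallel[OF w(2) w(1) c1(1) a] by blast
  obtain l2 where l2: "n2 = l2 *\<^sub>R w" using hyperplane_normal_parallel[OF w(2) w(1) c2(1) a] by blast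
  have eq: "n1 = (l1 / l2) *\<^sub>R n2" using l1 l2 n20 by simp
  obtain p where p: "p \<in> interior P" using int by blast
  have "n1 \<bullet> p - c1 = (l1 / l2) * (n2 \<bullet> p - c2)"
    using c1 c2 a by (metis eq inner_diff_right inner_scaleR_left)
  moreover have "c1 < n1 \<bullet> p" "c2 < n2 \<bullet> p"
    using supporting_halfspace_interior_less n10 n20 c1(2) c2(2) p by blast+
  ultimately have "l1 / l2 > 0" by (metis diff_gt_0_iff_gt zero_less_mult_pos2)
  then show ?thesis using primitive_vec_scaleR_eq[OF p1 p2 eq] eq by simp
qed

lemma delzant_facet_normal:
  assumes "delzant P" and F: "F facet_of P"
  shows "prim_inward_normal P F (facet_normal P F)"
proof -
  have "interior P \<noteq> {}" "\<exists>nu. prim_inward_normal P F nu" using assms by (auto simp: delzant_def)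
  then show ?thesis
    unfolding facet_normal_def by (metis F prim_inward_normal_unique theI)
qed

lemma delzant_facet_fun_nonneg:
  assumes "delzant P" "F facet_of P" "x \<in> P"
  shows "0 \<le> facet_fun P F x"
proof -
  obtain c where c: "\<forall>x\<in>F. facet_normal P F \<bullet> x = c" "\<forall>x\<in>P. c \<le> facet_normal P F \<bullet> x"
    using delzant_facet_normal[OF assms(1,2)] unfolding prim_inward_normal_def by blast
  have "(SOME a. a \<in> F) \<in> F" using assms(2) by (simp add: facet_of_def some_in_eq)
  then show ?thesis using c assms(3) by (simp add: facet_fun_def)
qed

section \<open>Convex functions with vanishing partial derivatives\<close>

text \<open>Convexity on the line through \<open>y\<close> and \<open>x0\<close>, then Jensen for the \<open>N\<close> axis moves whose
  barycentre is \<open>x0 - s (y - x0)\<close>. Divided by \<open>s\<close>, the right-hand side tends to \<open>0\<close> as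
  \<open>s \<rightarrow> 0\<close> when the partial derivatives at \<open>x0\<close> vanish.\<close>

lemma convex_on_axis_average_bound:
  fixes u :: "real^'n::finite \<Rightarrow> real"
  defines "N \<equiv> real CARD('n)"
  assumes cvx: "convex_on S u" and x0: "x0 \<in> S" and y: "y \<in> S" and s: "0 < s" "s < 1"
    and opp: "x0 - s *\<^sub>R (y - x0) \<in> S"
    and axes: "\<And>i. x0 - s *\<^sub>R ((N * (y - x0) $ i) *\<^sub>R axis i 1) \<in> S"
  shows "N * s * (u x0 - u y) \<le> (\<Sum>i\<in>UNIV. u (x0 - s *\<^sub>R ((N * (y - x0) $ i) *\<^sub>R axis i 1)) - u x0)"
proof -
  define v where "v = y - x0"
  define p where "p i = x0 - s *\<^sub>R ((N * v $ i) *\<^sub>R axis i 1)" for i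
  have N: "N > 0" by (simp add: N_def)
  have fwd: "x0 + s *\<^sub>R v = (1 - s) *\<^sub>R x0 + s *\<^sub>R y" by (simp add: v_def algebra_simps)
  then have fwdS: "x0 + s *\<^sub>R v \<in> S"
    using convexD_alt[OF convex_on_imp_convex[OF cvx] x0 y] s by simp
  have "u (x0 + s *\<^sub>R v) \<le> (1 - s) * u x0 + s * u y"
    unfolding fwd using convex_onD[OF cvx] s x0 y by simp
  moreover have "u x0 \<le> (1/2) * u (x0 + s *\<^sub>R v) + (1/2) * u (x0 - s *\<^sub>R v)"
  proof -
    have "(1 - 1/2) *\<^sub>R (x0 + s *\<^sub>R v) + (1/2) *\<^sub>R (x0 - s *\<^sub>R v) = x0"
      by (simp add: vec_eq_iff field_simps)
    then show ?thesis
      using convex_onD[OF cvx, of "1/2" "x0 + s *\<^sub>R v" "x0 - s *\<^sub>R v"] fwdS opp by (simp add: v_def)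
  qed
  moreover have "u (x0 - s *\<^sub>R v) \<le> (\<Sum>i\<in>UNIV. (1 / N) * u (p i))"
  proof -
    have "(\<Sum>i\<in>UNIV. (1 / N) *\<^sub>R p i)
        = (\<Sum>i\<in>(UNIV::'n set). (1 / N) *\<^sub>R x0) - s *\<^sub>R (\<Sum>i\<in>UNIV. v $ i *\<^sub>R axis i 1)"
      using N by (simp add: p_def scaleR_diff_right sum_subtractf scaleR_sum_right)
    also have "(\<Sum>i\<in>(UNIV::'n set). (1 / N) *\<^sub>R x0) = x0"
      using N by (simp only: sum_constant_scaleR scaleR_scaleR) (simp add: N_def)
    also have "(\<Sum>i\<in>UNIV. v $ i *\<^sub>R axis i 1) = v"
      using basis_expansion[of v] by (simp add: scalar_mult_eq_scaleR)
    finally have "u (x0 - s *\<^sub>R v) = u (\<Sum>i\<in>UNIV. (1 / N) *\<^sub>R p i)" by simp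
    also have "\<dots> \<le> (\<Sum>i\<in>UNIV. (1 / N) * u (p i))"
      by (rule convex_on_sum[OF _ _ cvx]) (use N axes in \<open>auto simp: N_def p_def v_def\<close>)
    finally show ?thesis .
  qed
  ultimately have "s * (u x0 - u y) \<le> (\<Sum>i\<in>UNIV. (1 / N) * u (p i)) - u x0"
    by (simp add: algebra_simps)
  then have "N * (s * (u x0 - u y)) \<le> N * ((\<Sum>i\<in>UNIV. (1 / N) * u (p i)) - u x0)"
    using N by (simp add: mult_left_mono)
  also have "\<dots> = (\<Sum>i\<in>UNIV. u (p i) - u x0)"
    using N by (simp add: sum_subtractf right_diff_distrib sum_distrib_left N_def)
  finally show ?thesis by (simp add: p_def v_def mult.assoc)
qed

lemma convex_on_min_at_vanishing_partials:
  fixes u :: "real^'n::finite \<Rightarrow> real"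
  assumes S: "open S" and cvx: "convex_on S u" and x0: "x0 \<in> S" and y: "y \<in> S"
    and d: "\<And>i. ((\<lambda>t. u (x0 + t *\<^sub>R axis i 1)) has_real_derivative 0) (at 0)"
  shows "u x0 \<le> u y"
proof -
  define N where "N = real CARD('n)"
  define w where "w i = (N * (y - x0) $ i) *\<^sub>R axis i (1::real)" for i
  define q where "q i s = (u (x0 - s *\<^sub>R w i) - u x0) / s" for i s
  have "((\<lambda>s. q i s) \<longlongrightarrow> 0) (at_right 0)" for i
  proof -
    have "((\<lambda>s. u (x0 + (s * - (N * (y - x0) $ i)) *\<^sub>R axis i 1)) has_real_derivative 0 * - (N * (y - x0) $ i))
        (at 0 within {0<..})"
      by (rule DERIV_chain2[where f="\<lambda>t. u (x0 + t *\<^sub>R axis i 1)"])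
         (use d[of i] in \<open>auto intro!: derivative_eq_intros\<close>)
    then show ?thesis by (simp add: has_field_derivative_iff q_def w_def)
  qed
  then have lim: "((\<lambda>s. \<Sum>i\<in>UNIV. q i s) \<longlongrightarrow> 0) (at_right 0)"
    using tendsto_sum[of UNIV "\<lambda>i s. q i s" "\<lambda>i. 0"] by simp
  have near: "\<forall>\<^sub>F s in at_right 0. x0 - s *\<^sub>R z \<in> S" for z
    by (rule topological_tendstoD[OF _ S x0]) (auto intro!: tendsto_eq_intros)
  have below_1: "\<forall>\<^sub>F s in at_right 0. s < (1::real)"
    by (auto simp: eventually_at_right_field intro!: exI[of _ 1])
  have "\<forall>\<^sub>F s in at_right 0. N * (u x0 - u y) \<le> (\<Sum>i\<in>UNIV. q i s)"
    using eventually_at_right_less[of 0] below_1 near[of "y - x0"]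
      eventually_all_finite[of "\<lambda>s i. x0 - s *\<^sub>R w i \<in> S", OF near]
  proof eventually_elim
    case (elim s)
    then have "N * s * (u x0 - u y) \<le> (\<Sum>i\<in>UNIV. u (x0 - s *\<^sub>R w i) - u x0)"
      using convex_on_axis_average_bound[OF cvx x0 y] by (simp add: N_def w_def)
    then show ?case
      using elim by (simp add: q_def sum_divide_distrib[symmetric] pos_le_divide_eq mult_ac)
  qed
  then have "N * (u x0 - u y) \<le> 0" by (rule tendsto_le[OF trivial_limit_at_right_real lim tendsto_const])
  then show ?thesis by (simp add: N_def mult_le_0_iff)
qed

lemma continuous_on_x_ln_x: "continuous_on {0..} (\<lambda>t::real. t * ln t)"
  unfolding continuous_on_eq_continuous_within
proof
  fix t :: real assume t: "t \<in> {0..}"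
  show "continuous (at t within {0..}) (\<lambda>t. t * ln t)"
  proof (cases "t = 0")
    case True
    have "((\<lambda>t::real. t * ln t) \<longlongrightarrow> 0) (at_right 0)" by real_asymp
    then show ?thesis using True by (simp add: continuous_within at_within_Ici_at_right)
  next
    case False
    then have "isCont ln t" using t by (simp add: isCont_ln)
    then show ?thesis by (rule continuous_at_imp_continuous_at_within[OF isCont_mult[OF continuous_ident]])
  qed
qed

lemma smooth_on_imp_continuous_on:
  assumes "smooth_on S f" shows "continuous_on S f"
proof -
  obtain U g where U: "S \<subseteq> U" "C_inf_on U g" "\<forall>x\<in>S. g x = f x"
    using assms by (auto simp: smooth_on_def)
  have "continuous_on U (iter_partial [] g)" using U(2) by (simp add: C_inf_on_def)
  then have "continuous_on S g" using U(1) continuous_on_subset by (auto simp: iter_partial_def)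
  then show ?thesis by (rule continuous_on_eq) (use U(3) in auto)
qed

lemma C_inf_on_has_partial:
  assumes "C_inf_on U g" "x \<in> U"
  shows "((\<lambda>t. g (x + t *\<^sub>R axis i 1)) has_real_derivative partial i g x) (at 0)"
proof -
  have "(\<lambda>t. iter_partial [] g (x + t *\<^sub>R axis i 1)) differentiable (at 0)"
    using assms by (auto simp: C_inf_on_def)
  then show ?thesis
    by (simp add: partial_def iter_partial_def DERIV_deriv_iff_real_differentiable)
qed

lemma strictly_convex_on_imp_convex_on:
  fixes f :: "real^'n::finite \<Rightarrow> real"
  assumes "strictly_convex_on S f" shows "convex_on S f"
proof (rule convex_onI)
  show "convex S" using assms by (simp add: strictly_convex_on_def)
  fix t :: real and x y assume t: "0 < t" "t < 1" and xy: "x \<in> S" "y \<in> S"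
  show "f ((1 - t) *\<^sub>R x + t *\<^sub>R y) \<le> (1 - t) * f x + t * f y"
  proof (cases "x = y")
    case True
    then show ?thesis by (simp add: algebra_simps flip: scaleR_add_left)
  next
    case False
    then show ?thesis using assms t xy unfolding strictly_convex_on_def by (blast intro: less_imp_le)
  qed
qed

text \<open>Continuity up to the boundary comes from Guillemin's boundary conditions, where the
  singular terms are of the form \<open>l ln l\<close> with \<open>l \<ge> 0\<close> on \<open>P\<close>.\<close>

lemma symplectic_potential_continuous_on:
  assumes del: "delzant P" and sp: "symplectic_potential P u"
  shows "continuous_on P u"
proof -
  obtain f where f: "smooth_on P f"
    "\<forall>x\<in>P. u x = (1/2) * (\<Sum>F\<in>{F. F facet_of P}. facet_fun P F x * ln (facet_fun P F x)) + f x"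
    using sp unfolding symplectic_potential_def by blast
  have "continuous_on P (\<lambda>x. facet_fun P F x * ln (facet_fun P F x))" if F: "F facet_of P" for F
  proof (rule continuous_on_compose2[OF continuous_on_x_ln_x])
    show "continuous_on P (facet_fun P F)" unfolding facet_fun_def by (intro continuous_intros)
    show "facet_fun P F ` P \<subseteq> {0..}" using delzant_facet_fun_nonneg[OF del F] by auto
  qed
  then have "continuous_on P
      (\<lambda>x. (1/2) * (\<Sum>F\<in>{F. F facet_of P}. facet_fun P F x * ln (facet_fun P F x)) + f x)"
    by (intro continuous_on_add continuous_on_mult[OF continuous_on_const] continuous_on_sum
        smooth_on_imp_continuous_on[OF f(1)]) auto
  then show ?thesis by (rule continuous_on_eq) (use f(2) in auto)
qed

lemma normalized_symplectic_potential_nonneg: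
  assumes del: "delzant P" and sp: "symplectic_potential P u" and nz: "normalized_at x0 u"
    and x0: "x0 \<in> interior P" and y: "y \<in> P"
  shows "0 \<le> u y"
proof -
  have Ci: "C_inf_on (interior P) u" and cvx: "convex_on (interior P) u"
    using sp strictly_convex_on_imp_convex_on unfolding symplectic_potential_def by blast+
  have "((\<lambda>t. u (x0 + t *\<^sub>R axis i 1)) has_real_derivative 0) (at 0)" for i
    using C_inf_on_has_partial[OF Ci x0, of i] nz by (simp add: normalized_at_def)
  then have int: "\<forall>z\<in>interior P. 0 \<le> u z"
    using convex_on_min_at_vanishing_partials[OF open_interior cvx x0] nz by (simp add: normalized_at_def)
  have pol: "polytope P" "interior P \<noteq> {}" using del by (auto simp: delzant_def)
  then have "closure (interior P) = closure P"
    using convex_closure_interior polytope_imp_convex by blast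
  then have "closure (interior P) = P" using polytope_imp_closed[OF pol(1)] by simp
  then show ?thesis
    using continuous_ge_on_closure[of "interior P" u y 0] symplectic_potential_continuous_on[OF del sp] y int
    by simp
qed

lemma standard_position_coordinate_facet:
  "standard_position P \<Longrightarrow> P \<inter> {x. x $ k = 0} facet_of P"
  unfolding standard_position_def by blast

lemma primitive_vec_axis: "primitive_vec (axis k (1::real))"
proof -
  have "\<not> integral_vec ((1 / of_int m) *\<^sub>R axis k (1::real))" if "m > 1" for m :: int
  proof
    assume "integral_vec ((1 / of_int m) *\<^sub>R axis k (1::real))"
    then have "((1 / of_int m) *\<^sub>R axis k (1::real)) $ k \<in> \<int>" unfolding integral_vec_def by blast
    then have "1 / real_of_int m \<in> \<int>" by simp
    then show False using that not_Ints_between_0_1[of "1 / real_of_int m"] by simp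
  qed
  moreover have "integral_vec (axis k (1::real))" by (simp add: integral_vec_def axis_def)
  ultimately show ?thesis by (simp add: primitive_vec_def axis_eq_0_iff)
qed

lemma facet_normal_coordinate_facet:
  assumes del: "delzant P" and sp: "standard_position P"
  shows "facet_normal P (P \<inter> {x. x $ k = 0}) = axis k 1"
proof (rule prim_inward_normal_unique)
  show "interior P \<noteq> {}" using del by (simp add: delzant_def)
  show F: "P \<inter> {x. x $ k = 0} facet_of P" by (rule standard_position_coordinate_facet[OF sp])
  show "prim_inward_normal P (P \<inter> {x. x $ k = 0}) (facet_normal P (P \<inter> {x. x $ k = 0}))"
    by (rule delzant_facet_normal[OF del F])
  show "prim_inward_normal P (P \<inter> {x. x $ k = 0}) (axis k 1)"
    using sp primitive_vec_axis
    by (auto simp: prim_inward_normal_def standard_position_def inner_axis' intro!: exI[of _ 0])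
qed

lemma coordinate_hyperplane_eq: "{x::real^'n::finite. x $ k = 0} = {x. axis k 1 \<bullet> x = 0}"
  by (simp add: inner_axis')

lemma coordinate_facet_compact_convex:
  assumes "delzant P"
  shows "compact (P \<inter> {x. x $ k = 0})" "convex (P \<inter> {x. x $ k = 0})"
proof -
  have "polytope P" using assms by (simp add: delzant_def)
  then show "compact (P \<inter> {x. x $ k = 0})" "convex (P \<inter> {x. x $ k = 0})"
    unfolding coordinate_hyperplane_eq
    by (simp_all add: compact_Int_closed closed_hyperplane convex_Int convex_hyperplane
        polytope_imp_compact polytope_imp_convex)
qed

lemma affine_hull_coordinate_facet:
  fixes P :: "(real^'n::finite) set"
  assumes del: "delzant P" and sp: "standard_position P"
  shows "affine hull (P \<inter> {x. x $ k = 0}) = {x. x $ k = 0}"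
proof (rule affine_dim_equal)
  let ?Q = "P \<inter> {x. x $ k = 0}"
  have F: "?Q facet_of P" by (rule standard_position_coordinate_facet[OF sp])
  show "affine {x::real^'n. x $ k = 0}" unfolding coordinate_hyperplane_eq by (rule affine_hyperplane)
  then show "affine hull ?Q \<subseteq> {x. x $ k = 0}" by (intro hull_minimal) auto
  show "affine (affine hull ?Q)" "affine hull ?Q \<noteq> {}" using F by (auto simp: facet_of_def)
  have "aff_dim ?Q = int DIM(real^'n) - 1"
    using F del aff_dim_nonempty_interior[of P] by (auto simp: facet_of_def delzant_def)
  then show "aff_dim (affine hull ?Q) = aff_dim {x::real^'n. x $ k = 0}"
    unfolding coordinate_hyperplane_eq aff_dim_affine_hull
    using aff_dim_hyperplane[of "axis k (1::real)" 0] by (simp add: axis_eq_0_iff)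
qed

lemma coordinate_facet_subset_frontier:
  assumes del: "delzant P" and sp: "standard_position P"
  shows "P \<inter> {x. x $ k = 0} \<subseteq> frontier P"
proof -
  have F: "P \<inter> {x. x $ k = 0} facet_of P" by (rule standard_position_coordinate_facet[OF sp])
  moreover have "P \<inter> {x. x $ k = 0} \<noteq> P" using F by (auto simp: facet_of_def)
  ultimately have "P \<inter> {x. x $ k = 0} \<subseteq> rel_frontier P"
    using face_of_subset_rel_frontier by (auto simp: facet_of_def)
  then show ?thesis using del rel_frontier_nonempty_interior by (auto simp: delzant_def)
qed

lemma inner_part_near_rel_interior:
  fixes Q :: "(real^'n::finite) set"
  assumes cvx: "convex Q" and bd: "bounded Q" and x: "x \<in> inner_part Q eps" and e: "eps > 0"
    and y: "y \<in> affine hull Q" and dxy: "dist x y < eps"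
  shows "y \<in> rel_interior Q"
proof -
  have far: "\<forall>z\<in>rel_frontier Q. eps \<le> dist x z" using x by (auto simp: inner_part_def)
  have xr: "x \<in> rel_interior Q"
  proof (rule ccontr)
    assume "x \<notin> rel_interior Q"
    then have "x \<in> rel_frontier Q" using x closure_subset by (auto simp: inner_part_def rel_frontier_def)
    then show False using far e by force
  qed
  show ?thesis
  proof (cases "y = x")
    case False
    then have l: "y - x \<noteq> 0" by simp
    have "x + (y - x) \<in> affine hull Q" using y by simp
    then obtain d where d: "0 < d" "x + d *\<^sub>R (y - x) \<in> rel_frontier Q"
      and di: "\<And>e. 0 \<le> e \<Longrightarrow> e < d \<Longrightarrow> x + e *\<^sub>R (y - x) \<in> rel_interior Q"
      using ray_to_rel_frontier[OF bd xr _ l] by blast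
    have "d > 1"
    proof (rule ccontr)
      assume "\<not> d > 1"
      then have "dist x (x + d *\<^sub>R (y - x)) \<le> dist x y"
        using d(1) by (simp add: dist_norm norm_minus_commute mult_left_le_one_le)
      then show False using far d(2) dxy by force
    qed
    then show ?thesis using di[of 1] by simp
  qed (use xr in simp)
qed

lemma inner_part_mono_dist:
  assumes x: "x \<in> inner_part Q eps" and z: "z \<in> Q" and dxz: "dist x z \<le> eps - d"
  shows "z \<in> inner_part Q d"
proof -
  have "d \<le> dist z w" if "w \<in> rel_frontier Q" for w
  proof -
    have "eps \<le> dist x w" using x that by (auto simp: inner_part_def)
    then show ?thesis using dist_triangle[of x w z] dxz by linarith
  qed
  then show ?thesis using z by (simp add: inner_part_def)
qed

section \<open>Integrals over facets and boxes\<close>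

lemma integral_nonneg_if_nonneg:
  fixes f :: "'a::euclidean_space \<Rightarrow> real"
  assumes "\<And>x. x \<in> S \<Longrightarrow> 0 \<le> f x"
  shows "0 \<le> integral S f"
  using assms integral_nonneg not_integrable_integral by (metis order_refl)

lemma facet_lebesgue_integral_nonneg:
  fixes F :: "(real^'n::finite) set"
  assumes nu: "nu \<noteq> 0" and on: "\<forall>x\<in>F. nu \<bullet> x = c" and F: "F \<noteq> {}"
    and pos: "\<And>y. y \<in> F \<Longrightarrow> 0 \<le> u y"
  shows "0 \<le> facet_lebesgue_integral F nu u"
proof -
  define e where "e = (1 / norm nu) *\<^sub>R nu"
  have ee: "e \<bullet> e = 1" using nu by (simp add: e_def power2_norm_eq_inner[symmetric] power2_eq_square)
  define a0 where "a0 = (SOME a. a \<in> F)"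
  have a0: "a0 \<in> F" using F by (simp add: a0_def some_in_eq)
  have "0 \<le> u (y - ((y - a0) \<bullet> e) *\<^sub>R e)" if slab: "y \<in> {a + t *\<^sub>R e | a t. a \<in> F \<and> 0 \<le> t \<and> t \<le> 1}" for y
  proof -
    obtain a t where y: "y = a + t *\<^sub>R e" "a \<in> F" using slab by blast
    have "nu \<bullet> (a - a0) = 0" using on a0 y(2) by (simp add: inner_diff_right)
    then have "(a - a0) \<bullet> e = 0" by (simp add: e_def inner_commute)
    then have "(y - a0) \<bullet> e = t" using ee by (simp add: y(1) inner_add_left inner_diff_left algebra_simps)
    then have "y - ((y - a0) \<bullet> e) *\<^sub>R e = a" using y(1) by simp
    then show ?thesis using pos y(2) by simp
  qed
  then show ?thesis
    unfolding facet_lebesgue_integral_def Let_def e_def[symmetric] a0_def[symmetric]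
    by (rule integral_nonneg_if_nonneg)
qed

lemma facet_integral_le_boundary_integral:
  assumes del: "delzant P" and F: "F facet_of P" and pos: "\<And>y. y \<in> P \<Longrightarrow> 0 \<le> u y"
  shows "facet_lebesgue_integral F (facet_normal P F) u / norm (facet_normal P F) \<le> boundary_integral P u"
  unfolding boundary_integral_def
proof (rule member_le_sum)
  have "{F. F facet_of P} \<subseteq> {F. F face_of P}" by (auto simp: facet_of_def)
  then show "finite {F. F facet_of P}"
    using del finite_polytope_faces finite_subset by (auto simp: delzant_def)
  fix G assume "G \<in> {F. F facet_of P} - {F}"
  then have G: "G facet_of P" by simp
  then obtain c where c: "\<forall>x\<in>G. facet_normal P G \<bullet> x = c" and pv: "primitive_vec (facet_normal P G)"
    using delzant_facet_normal[OF del] unfolding prim_inward_normal_def by blast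
  have G_ne: "G \<noteq> {}" and GP: "G \<subseteq> P" using G by (auto simp: facet_of_def dest: face_of_imp_subset)
  have "0 \<le> facet_lebesgue_integral G (facet_normal P G) u"
    by (rule facet_lebesgue_integral_nonneg[OF _ c G_ne]) (use pv pos GP in \<open>auto simp: primitive_vec_def\<close>)
  then show "0 \<le> facet_lebesgue_integral G (facet_normal P G) u / norm (facet_normal P G)" by simp
qed (use F in simp)

lemma continuous_on_compact_integrable:
  fixes h :: "'a::euclidean_space \<Rightarrow> real"
  assumes S: "compact S" and h: "continuous_on S h"
  shows "h integrable_on S"
proof -
  have "bounded (h ` S)" using compact_continuous_image[OF h S] compact_imp_bounded by blast
  then obtain M where M: "\<forall>y\<in>h ` S. norm y \<le> M" by (auto simp: bounded_iff)
  have L: "S \<in> lmeasurable" using lmeasurable_compact[OF S] .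
  show ?thesis
  proof (rule measurable_bounded_by_integrable_imp_integrable)
    show "h \<in> borel_measurable (lebesgue_on S)" "S \<in> sets lebesgue"
      using continuous_imp_measurable_on_sets_lebesgue[OF h] L fmeasurableD by blast+
    show "(\<lambda>x. M) integrable_on S" using integrable_on_const[OF L] .
    show "norm (h x) \<le> M" if "x \<in> S" for x using M that by blast
  qed
qed

lemma convex_on_affine_image:
  assumes f: "convex_on T f" and g: "linear g" and S: "convex S" and ST: "(\<lambda>y. c + g y) ` S \<subseteq> T"
  shows "convex_on S (\<lambda>y. f (c + g y))"
proof (rule convex_onI[OF _ S])
  fix t :: real and x y assume t: "0 < t" "t < 1" and xy: "x \<in> S" "y \<in> S"
  have "c + g ((1 - t) *\<^sub>R x + t *\<^sub>R y) = (1 - t) *\<^sub>R (c + g x) + t *\<^sub>R (c + g y)"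
    by (simp only: linear_add[OF g] linear_scale[OF g]) (simp add: algebra_simps)
  then show "f (c + g ((1 - t) *\<^sub>R x + t *\<^sub>R y)) \<le> (1 - t) * f (c + g x) + t * f (c + g y)"
    using convex_onD[OF f, of t "c + g x" "c + g y"] ST t xy by auto
qed

text \<open>Averaging \<open>f\<close> with its reflection in the centre of the box.\<close>

lemma convex_on_cbox_midpoint_le_integral:
  fixes f :: "'a::euclidean_space \<Rightarrow> real"
  assumes cvx: "convex_on (cbox a b) f" and int: "f integrable_on cbox a b"
  shows "measure lborel (cbox a b) * f (midpoint a b) \<le> integral (cbox a b) f"
proof (cases "cbox a b = {}")
  case False
  have r_box: "(\<lambda>y. a + b - y) ` cbox a b = cbox a b"
    using image_affinity_cbox[of "-1" "a + b" a b] False by (simp add: algebra_simps)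
  have "(f has_integral integral (cbox a b) f) (cbox a b)" using int by blast
  from has_integral_affinity[OF this, of "-1" "a + b"]
  have refl_int: "((\<lambda>y. f (a + b - y)) has_integral integral (cbox a b) f) (cbox a b)"
    using r_box by (simp add: algebra_simps)
  have sum: "((\<lambda>y. f y + f (a + b - y)) has_integral 2 * integral (cbox a b) f) (cbox a b)"
    using has_integral_add[OF integrable_integral[OF int] refl_int] by simp
  have mid: "2 * f (midpoint a b) \<le> f y + f (a + b - y)" if y: "y \<in> cbox a b" for y
  proof -
    have "(1 - 1/2) *\<^sub>R y + (1/2) *\<^sub>R (a + b - y) = midpoint a b"
      by (simp add: midpoint_def algebra_simps)
    moreover have "a + b - y \<in> cbox a b" using r_box y by blast
    ultimately have "f (midpoint a b) \<le> (1 - 1/2) * f y + (1/2) * f (a + b - y)"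
      using convex_onD[OF cvx, of "1/2" y "a + b - y"] y by simp
    then show ?thesis by simp
  qed
  have "integral (cbox a b) (\<lambda>y. 2 * f (midpoint a b)) \<le> integral (cbox a b) (\<lambda>y. f y + f (a + b - y))"
    by (rule integral_le) (use sum mid in auto)
  then show ?thesis using integral_unique[OF sum] by simp
qed simp

definition zero_coord :: "'n::finite \<Rightarrow> real^'n \<Rightarrow> real^'n" where
  "zero_coord k y = y - (y $ k) *\<^sub>R axis k 1"

lemma zero_coord_nth [simp]: "zero_coord k y $ j = (if j = k then 0 else y $ j)"
  by (simp add: zero_coord_def axis_def)

lemma linear_zero_coord: "linear (zero_coord k)"
  by (simp add: linear_iff vec_eq_iff)

definition coordinate_slab :: "(real^'n::finite) set \<Rightarrow> 'n \<Rightarrow> (real^'n) set" where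
  "coordinate_slab Q k = {a + t *\<^sub>R axis k 1 | a t. a \<in> Q \<and> 0 \<le> t \<and> t \<le> 1}"

lemma compact_coordinate_slab:
  assumes "compact Q" shows "compact (coordinate_slab Q k)"
proof -
  have "coordinate_slab Q k = (\<lambda>p. fst p + snd p *\<^sub>R axis k 1) ` (Q \<times> {0..1})"
    unfolding coordinate_slab_def by force
  then show ?thesis
    by (simp only:) (intro compact_continuous_image compact_Times assms compact_Icc continuous_intros)
qed

lemma zero_coord_in_coordinate_slab:
  assumes Q: "Q \<subseteq> {x. x $ k = 0}" and y: "y \<in> coordinate_slab Q k"
  shows "zero_coord k y \<in> Q"
proof -
  obtain a t where a: "y = a + t *\<^sub>R axis k 1" "a \<in> Q" using y by (auto simp: coordinate_slab_def)
  then have "zero_coord k y = a" using Q by (auto simp: vec_eq_iff axis_def)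
  then show ?thesis using a(2) by simp
qed

lemma mem_coordinate_slab:
  assumes "zero_coord k y \<in> Q" "0 \<le> y $ k" "y $ k \<le> 1"
  shows "y \<in> coordinate_slab Q k"
proof -
  have "y = zero_coord k y + (y $ k) *\<^sub>R axis k 1" by (simp add: zero_coord_def)
  then show ?thesis unfolding coordinate_slab_def using assms by blast
qed

text \<open>The slab of unit height over \<open>Q\<close> is how the defining integral realises the
  \<open>(n-1)\<close>-dimensional Lebesgue measure on a coordinate facet.\<close>

lemma facet_lebesgue_integral_coordinate:
  assumes Q: "Q \<subseteq> {x. x $ k = 0}" "Q \<noteq> {}"
  shows "facet_lebesgue_integral Q (axis k 1) u = integral (coordinate_slab Q k) (u \<circ> zero_coord k)"
proof -
  have "(SOME a. a \<in> Q) \<in> Q" using Q(2) by (simp add: some_in_eq)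
  then have "(SOME a. a \<in> Q) $ k = 0" using Q(1) by blast
  then have "(\<lambda>y. u (y - ((y - (SOME a. a \<in> Q)) \<bullet> axis k 1) *\<^sub>R axis k 1)) = u \<circ> zero_coord k"
    by (simp add: fun_eq_iff zero_coord_def inner_axis)
  then show ?thesis by (simp add: facet_lebesgue_integral_def coordinate_slab_def)
qed

definition facet_box :: "real^'n::finite \<Rightarrow> 'n \<Rightarrow> real \<Rightarrow> (real^'n) set" where
  "facet_box x k \<delta> = cbox (\<chi> j. if j = k then 0 else x $ j - \<delta>) (\<chi> j. if j = k then 1 else x $ j + \<delta>)"

lemma facet_box_bounds:
  assumes "y \<in> facet_box x k \<delta>"
  shows "0 \<le> y $ k" "y $ k \<le> 1" "j \<noteq> k \<Longrightarrow> \<bar>y $ j - x $ j\<bar> \<le> \<delta>"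
proof -
  have y: "(if j = k then 0 else x $ j - \<delta>) \<le> y $ j \<and> y $ j \<le> (if j = k then 1 else x $ j + \<delta>)" for j
    using assms by (simp add: facet_box_def mem_box_cart)
  show "0 \<le> y $ k" "y $ k \<le> 1" using y[of k] by simp_all
  show "\<bar>y $ j - x $ j\<bar> \<le> \<delta>" if "j \<noteq> k" using y[of j] that by (simp add: abs_le_iff)
qed

lemma measure_facet_box:
  fixes x :: "real^'n::finite"
  assumes "\<delta> \<ge> 0"
  shows "measure lborel (facet_box x k \<delta>) = (2 * \<delta>) ^ (CARD('n) - 1)"
proof -
  have "measure lborel (facet_box x k \<delta>) = (\<Prod>j\<in>UNIV. if j = k then 1 else 2 * \<delta>)"
    using assms unfolding facet_box_def
    by (subst content_cbox_cart) (auto simp: interval_ne_empty_cart intro!: prod.cong)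
  also have "\<dots> = (2 * \<delta>) ^ (CARD('n) - 1)"
    by (simp add: prod.If_cases Collect_neg_eq[symmetric] Compl_eq_Diff_UNIV card_Diff_singleton)
  finally show ?thesis .
qed

lemma zero_coord_midpoint_facet_box:
  assumes "x $ k = 0"
  shows "zero_coord k (midpoint (\<chi> j. if j = k then 0 else x $ j - \<delta>) (\<chi> j. if j = k then 1 else x $ j + \<delta>)) = x"
  using assms by (simp add: vec_eq_iff midpoint_def)

lemma dist_zero_coord_facet_box:
  fixes x :: "real^'n::finite"
  assumes "x $ k = 0" "y \<in> facet_box x k \<delta>" "\<delta> \<ge> 0"
  shows "dist x (zero_coord k y) \<le> real CARD('n) * \<delta>"
proof -
  have "dist x (zero_coord k y) \<le> (\<Sum>j\<in>UNIV. \<bar>(x - zero_coord k y) $ j\<bar>)"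
    unfolding dist_norm by (rule norm_le_l1_cart)
  also have "\<dots> \<le> (\<Sum>j\<in>(UNIV::'n set). \<delta>)"
  proof (rule sum_mono)
    fix j
    show "\<bar>(x - zero_coord k y) $ j\<bar> \<le> \<delta>"
      using assms facet_box_bounds(3)[OF assms(2), of j] facet_box_bounds(1)[OF assms(2)]
      by (cases "j = k") (auto simp: abs_minus_commute)
  qed
  finally show ?thesis by simp
qed

lemma potential_le_boundary_integral:
  fixes P :: "(real^'n::finite) set"
  assumes del: "delzant P" and sp: "standard_position P" and sym: "symplectic_potential P u"
    and pos: "\<And>y. y \<in> P \<Longrightarrow> 0 \<le> u y"
    and e: "eps > 0" and x: "x \<in> inner_part (P \<inter> {x. x $ k = 0}) eps"
  shows "u x * (eps / CARD('n)) ^ (CARD('n) - 1) \<le> boundary_integral P u"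
proof -
  define Q where "Q = P \<inter> {x. x $ k = 0}"
  define \<delta> where "\<delta> = eps / (2 * CARD('n))"
  define lo where "lo = (\<chi> j. if j = k then 0 else x $ j - \<delta>)"
  define hi where "hi = (\<chi> j. if j = k then 1 else x $ j + \<delta>)"
  define h where "h = u \<circ> zero_coord k"
  have B: "facet_box x k \<delta> = cbox lo hi" by (simp add: facet_box_def lo_def hi_def)
  have Qk: "Q \<subseteq> {x. x $ k = 0}" and xQ: "x \<in> Q" using x by (auto simp: Q_def inner_part_def)
  have cQ: "compact Q" "convex Q" using coordinate_facet_compact_convex[OF del] by (simp_all add: Q_def)
  have rel: "zero_coord k y \<in> rel_interior Q" if "y \<in> facet_box x k \<delta>" for y
  proof (rule inner_part_near_rel_interior[OF cQ(2) compact_imp_bounded[OF cQ(1)] x[folded Q_def] e])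
    show "zero_coord k y \<in> affine hull Q"
      using affine_hull_coordinate_facet[OF del sp] by (simp add: Q_def)
    have "dist x (zero_coord k y) \<le> eps / 2"
      using dist_zero_coord_facet_box[of x k y \<delta>] Qk xQ that e by (auto simp: \<delta>_def)
    then show "dist x (zero_coord k y) < eps" using e by simp
  qed
  have box_slab: "facet_box x k \<delta> \<subseteq> coordinate_slab Q k"
  proof
    fix y assume y: "y \<in> facet_box x k \<delta>"
    show "y \<in> coordinate_slab Q k"
      using mem_coordinate_slab rel[OF y] rel_interior_subset facet_box_bounds(1,2)[OF y] by blast
  qed
  have "continuous_on UNIV (zero_coord k)"
    by (rule linear_continuous_on) (simp add: linear_zero_coord flip: linear_conv_bounded_linear)
  moreover have "zero_coord k ` coordinate_slab Q k \<subseteq> P"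
    using zero_coord_in_coordinate_slab[OF Qk] by (auto simp: Q_def)
  ultimately have "continuous_on (coordinate_slab Q k) h"
    unfolding h_def using symplectic_potential_continuous_on[OF del sym]
    by (metis continuous_on_compose continuous_on_subset subset_UNIV)
  then have int_slab: "h integrable_on coordinate_slab Q k"
    and int_box: "h integrable_on cbox lo hi"
    using box_slab continuous_on_compact_integrable compact_coordinate_slab[OF cQ(1)]
    by (auto simp: B intro: integrable_continuous continuous_on_subset)
  have cvxQ: "convex_on (rel_interior Q) u"
    using sym coordinate_facet_subset_frontier[OF del sp] standard_position_coordinate_facet[OF sp]
    by (auto simp: symplectic_potential_def Q_def facet_of_def intro: strictly_convex_on_imp_convex_on)
  have "zero_coord k ` cbox lo hi \<subseteq> rel_interior Q" using rel B by auto
  then have cvx: "convex_on (cbox lo hi) h"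
    using convex_on_affine_image[where c=0, OF cvxQ linear_zero_coord convex_box(1)]
    by (simp add: h_def o_def)
  have "measure lborel (cbox lo hi) = (eps / CARD('n)) ^ (CARD('n) - 1)"
    using measure_facet_box[of \<delta> x k] e by (simp add: B[symmetric] \<delta>_def)
  moreover have "h (midpoint lo hi) = u x"
    using zero_coord_midpoint_facet_box[of x k \<delta>] Qk xQ by (auto simp: h_def lo_def hi_def)
  ultimately have "u x * (eps / CARD('n)) ^ (CARD('n) - 1) = measure lborel (cbox lo hi) * h (midpoint lo hi)"
    by simp
  also have "\<dots> \<le> integral (cbox lo hi) h"
    by (rule convex_on_cbox_midpoint_le_integral[OF cvx int_box])
  also have "\<dots> \<le> integral (coordinate_slab Q k) h"
    using box_slab pos zero_coord_in_coordinate_slab[OF Qk]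
    by (intro integral_subset_le int_box int_slab) (auto simp: B h_def Q_def)
  also have "\<dots> = facet_lebesgue_integral Q (axis k 1) u"
    using facet_lebesgue_integral_coordinate[OF Qk, of u] xQ unfolding h_def by force
  also have "\<dots> \<le> boundary_integral P u"
    using facet_integral_le_boundary_integral[OF del standard_position_coordinate_facet[OF sp] pos]
    by (simp add: Q_def facet_normal_coordinate_facet[OF del sp])
  finally show ?thesis .
qed

lemma convex_on_deriv_abs_less:
  fixes \<phi> :: "real \<Rightarrow> real"
  assumes cvx: "convex_on {-r..r} \<phi>" and r: "r > 0" and D: "(\<phi> has_real_derivative D) (at 0)"
    and "0 \<le> \<phi> 0" "\<phi> r < M" "\<phi> (-r) < M"
  shows "\<bar>D\<bar> < M / r"
proof -
  have dw: "(\<phi> has_real_derivative D) (at 0 within {-r..r})"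
    using D by (rule has_field_derivative_at_within)
  have c0: "0 \<in> interior {-r..r}" using r by simp
  have "D * (r - 0) \<le> \<phi> r - \<phi> 0"
    by (rule convex_on_imp_above_tangent[OF cvx connected_Icc c0 _ dw]) (use r in simp)
  moreover have "D * (-r - 0) \<le> \<phi> (-r) - \<phi> 0"
    by (rule convex_on_imp_above_tangent[OF cvx connected_Icc c0 _ dw]) (use r in simp)
  ultimately have "\<bar>D\<bar> * r < M" using assms(4-6) by (simp add: abs_if)
  then show ?thesis using r by (simp add: pos_less_divide_eq)
qed

lemma smooth_on_line_has_partial:
  assumes sm: "smooth_on S u" and e: "e > 0" and line: "\<And>t. \<bar>t\<bar> < e \<Longrightarrow> x + t *\<^sub>R axis i 1 \<in> S"
  shows "((\<lambda>t. u (x + t *\<^sub>R axis i 1)) has_real_derivative partial i u x) (at 0)"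
proof -
  obtain U g where U: "S \<subseteq> U" "C_inf_on U g" "\<forall>z\<in>S. g z = u z"
    using sm by (auto simp: smooth_on_def)
  have xU: "x \<in> U" using line[of 0] e U(1) by auto
  have D: "((\<lambda>t. u (x + t *\<^sub>R axis i 1)) has_real_derivative partial i g x) (at 0)"
  proof (rule has_field_derivative_transform_within_open[OF C_inf_on_has_partial[OF U(2) xU]])
    show "open {-e<..<e}" "0 \<in> {-e<..<e}" using e by auto
    show "g (x + t *\<^sub>R axis i 1) = u (x + t *\<^sub>R axis i 1)" if "t \<in> {-e<..<e}" for t
      using that line U(3) by (simp add: abs_less_iff)
  qed
  then have "partial i u x = partial i g x" by (simp add: partial_def DERIV_imp_deriv)
  then show ?thesis using D by simp
qed

lemma partial_less_on_coordinate_facet: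
  fixes P :: "(real^'n::finite) set" and u :: "real^'n \<Rightarrow> real"
  assumes del: "delzant P" and sp: "standard_position P" and sym: "symplectic_potential P u"
    and pos: "\<And>y. y \<in> P \<Longrightarrow> 0 \<le> u y"
    and e: "eps > 0" and x: "x \<in> inner_part (P \<inter> {x. x $ k = 0}) eps" and ik: "i \<noteq> k"
    and M: "\<And>z. z \<in> inner_part (P \<inter> {x. x $ k = 0}) (eps / 2) \<Longrightarrow> u z < M"
  shows "\<bar>partial i u x\<bar> < M / (eps / 2)"
proof -
  define Q where "Q = P \<inter> {x. x $ k = 0}"
  define r where "r = eps / 2"
  have r: "r > 0" "r < eps" using e by (auto simp: r_def)
  have xQ: "x \<in> Q" using x by (simp add: inner_part_def Q_def)
  have cQ: "compact Q" "convex Q" using coordinate_facet_compact_convex[OF del] by (simp_all add: Q_def)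
  have on_line: "x + t *\<^sub>R axis i 1 \<in> rel_interior Q" if "\<bar>t\<bar> < eps" for t
  proof (rule inner_part_near_rel_interior[OF cQ(2) compact_imp_bounded[OF cQ(1)] x[folded Q_def] e])
    show "x + t *\<^sub>R axis i 1 \<in> affine hull Q"
      using affine_hull_coordinate_facet[OF del sp] xQ ik by (simp add: Q_def axis_def)
    show "dist x (x + t *\<^sub>R axis i 1) < eps" using that by (simp add: dist_norm)
  qed
  have ends: "u (x + t *\<^sub>R axis i 1) < M" if "\<bar>t\<bar> = r" for t
  proof (rule M)
    have "x + t *\<^sub>R axis i 1 \<in> Q" using on_line[of t] rel_interior_subset that r by auto
    moreover have "dist x (x + t *\<^sub>R axis i 1) \<le> eps - eps / 2" using that by (simp add: dist_norm r_def)
    ultimately show "x + t *\<^sub>R axis i 1 \<in> inner_part (P \<inter> {x. x $ k = 0}) (eps / 2)"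
      using inner_part_mono_dist[OF x] by (simp add: Q_def)
  qed
  have "Q face_of P" "Q \<noteq> {}" "Q \<subseteq> frontier P"
    using standard_position_coordinate_facet[OF sp] coordinate_facet_subset_frontier[OF del sp]
    by (auto simp: Q_def facet_of_def)
  then have sm: "smooth_on (rel_interior Q) u" and cvxQ: "convex_on (rel_interior Q) u"
    using sym strictly_convex_on_imp_convex_on unfolding symplectic_potential_def by blast+
  have "(\<lambda>t. x + t *\<^sub>R axis i 1) ` {-r..r} \<subseteq> rel_interior Q" using on_line r by auto
  then have cvx: "convex_on {-r..r} (\<lambda>t. u (x + t *\<^sub>R axis i 1))"
    using convex_on_affine_image[OF cvxQ bounded_linear.linear[OF bounded_linear_scaleR_left]]
    by simp
  have D: "((\<lambda>t. u (x + t *\<^sub>R axis i 1)) has_real_derivative partial i u x) (at 0)"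
    using smooth_on_line_has_partial[OF sm e on_line] .
  show ?thesis
    using convex_on_deriv_abs_less[OF cvx r(1) D] pos xQ ends[of r] ends[of "-r"] r
    by (simp add: Q_def r_def)
qed

lemma potential_less_on_inner_part:
  fixes P :: "(real^'n::finite) set"
  assumes del: "delzant P" and sp: "standard_position P" and x0: "x0 \<in> interior P"
    and sym: "symplectic_potential P u" and nz: "normalized_at x0 u"
    and bi: "boundary_integral P u < C1"
    and d: "d > 0" and x: "x \<in> inner_part (P \<inter> {x. x $ k = 0}) d"
  shows "u x < C1 / (d / CARD('n)) ^ (CARD('n) - 1)"
proof -
  have "u x * (d / CARD('n)) ^ (CARD('n) - 1) < C1"
    using potential_le_boundary_integral[OF del sp sym _ d x]
      normalized_symplectic_potential_nonneg[OF del sym nz x0] bi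
    by fastforce
  then show ?thesis using d by (simp add: pos_less_divide_eq)
qed

theorem lemma3p9:
  fixes P :: "(real^'n::finite) set" and x0 :: "real^'n" and k :: 'n and eps C1 :: real
  assumes "delzant P" and "standard_position P" and "x0 \<in> interior P" and "eps > 0"
  shows "\<exists>C. \<forall>u. symplectic_potential P u \<and> normalized_at x0 u \<and>
            (\<forall>x\<in>interior P. Rm_sq u x \<le> 1) \<and> boundary_integral P u < C1 \<longrightarrow>
            (\<forall>x\<in>inner_part (P \<inter> {x. x $ k = 0}) eps.
               u x < C \<and> (\<forall>i. i \<noteq> k \<longrightarrow> \<bar>partial i u x\<bar> < C))"
proof -
  note del = assms(1) and sp = assms(2) and x0 = assms(3) and e = assms(4)
  define B where "B d = C1 / (d / CARD('n)) ^ (CARD('n) - 1)" for d :: real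
  show ?thesis
  proof (intro exI[of _ "max (B eps) (B (eps / 2) / (eps / 2))"] allI impI ballI conjI)
    fix u x
    assume "symplectic_potential P u \<and> normalized_at x0 u \<and>
            (\<forall>x\<in>interior P. Rm_sq u x \<le> 1) \<and> boundary_integral P u < C1"
    then have sym: "symplectic_potential P u" and nz: "normalized_at x0 u"
      and bi: "boundary_integral P u < C1" by auto
    assume x: "x \<in> inner_part (P \<inter> {x. x $ k = 0}) eps"
    have bound: "u z < B d" if "d > 0" "z \<in> inner_part (P \<inter> {x. x $ k = 0}) d" for d z
      unfolding B_def by (rule potential_less_on_inner_part[OF del sp x0 sym nz bi that])
    show "u x < max (B eps) (B (eps / 2) / (eps / 2))" using bound[OF e x] by simp
    fix i assume "i \<noteq> k"
    then have "\<bar>partial i u x\<bar> < B (eps / 2) / (eps / 2)"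
      using partial_less_on_coordinate_facet[OF del sp sym _ e x _ bound]
        normalized_symplectic_potential_nonneg[OF del sym nz x0] e by auto
    then show "\<bar>partial i u x\<bar> < max (B eps) (B (eps / 2) / (eps / 2))" by simp
  qed
qed

end
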